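(* Let $s,t,p\ge 1$, $A,B\in GL(n)$ and $Q\in\mathcal{P}(n)$ with $k=\lambda_1(Q)>1$. If the equation $X^s+A^*X^{-t}A+B^*X^{-p}B=Q$ has a Hermitian positive definite solution, then $$\rho^2(A)<\frac{q^q k^{1+\tilde q}}{(q+1)^{q+1}}\quad\text{and}\quad \rho^2(B)<\frac{q^q k^{1+\tilde q}}{(q+1)^{q+1}},$$ where $q=\min\{t/s,p/s\}$ and $\tilde q=\max\{t/s,p/s\}$.
   Context: $GL(n)$: $n\times n$ complex nonsingular matrices; $\mathcal{P}(n)$: $n\times n$ Hermitian positive definite matrices. For Hermitian $M$, $\lambda_1(M)$ is its largest eigenvalue; $\rho(M)$ is the spectral radius. Real powers of positive definite matrices are defined by functional calculus. *)

theory Defs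
  imports "Jordan_Normal_Form.Spectral_Radius" "Jordan_Normal_Form.Schur_Decomposition"
begin

definition hermitian_mat :: "nat \<Rightarrow> complex mat \<Rightarrow> bool" where
  "hermitian_mat n M \<longleftrightarrow> M \<in> carrier_mat n n \<and> mat_adjoint M = M"

definition posdef_mat :: "nat \<Rightarrow> complex mat \<Rightarrow> bool" where
  "posdef_mat n M \<longleftrightarrow> hermitian_mat n M \<and>
     (\<forall>v \<in> carrier_vec n. v \<noteq> 0\<^sub>v n \<longrightarrow>
        (let z = (M *\<^sub>v v) \<bullet> conjugate v in Im z = 0 \<and> Re z > 0))"

definition unitary_mat :: "nat \<Rightarrow> complex mat \<Rightarrow> bool" where
  "unitary_mat n U \<longleftrightarrow> U \<in> carrier_mat n n \<and> mat_adjoint U * U = 1\<^sub>m n"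

definition diag_of :: "nat \<Rightarrow> (nat \<Rightarrow> complex) \<Rightarrow> complex mat" where
  "diag_of n d = mat n n (\<lambda>(i,j). if i = j then d i else 0)"

definition mat_rpow :: "nat \<Rightarrow> complex mat \<Rightarrow> real \<Rightarrow> complex mat" where
  "mat_rpow n X r = (SOME M. \<exists>U d. unitary_mat n U \<and> (\<forall>i<n. d i > 0) \<and>
      X = U * diag_of n (\<lambda>i. complex_of_real (d i)) * mat_adjoint U \<and>
      M = U * diag_of n (\<lambda>i. complex_of_real (d i powr r)) * mat_adjoint U)"

text \<open>Largest eigenvalue of a Hermitian matrix (eigenvalues are real).\<close>
definition lambda_max :: "complex mat \<Rightarrow> real" where
  "lambda_max M = Max (Re ` spectrum M)"

end

theory Submission
  imports Defs
begin

text \<open>Let \<open>v\<close> be an eigenvector of \<open>A\<close> for the eigenvalue \<open>\<lambda>\<close> and test the equation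
  against it: \<open>v* Q v = v* X^s v + |\<lambda>|^2 v* X^(-t) v + (Bv)* X^(-p) (Bv)\<close>. The last term is
  positive because \<open>B\<close> is invertible, and \<open>v* Q v \<le> k |v|^2\<close>. In an orthonormal eigenbasis of
  \<open>X\<close>, Jensen's inequality for the convex function \<open>y \<mapsto> y^(-t/s)\<close> gives
  \<open>v* X^(-t) v \<ge> |v|^2 x^(-t/s)\<close> with \<open>x = v* X^s v / |v|^2\<close>, so \<open>x + |\<lambda>|^2 x^(-t/s) < k\<close>,
  i.e. \<open>|\<lambda>|^2 < (k - x) x^(t/s)\<close>. Writing \<open>x = k w\<close> with \<open>0 < w < 1\<close> and using \<open>k > 1\<close> and
  \<open>q \<le> t/s \<le> q~\<close>, the right-hand side is at most \<open>k^(1+q~) (1 - w) w^q\<close>, and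
  \<open>(1 - w) w^q \<le> q^q / (q + 1)^(q+1)\<close>. Exchanging the roles of \<open>A\<close> and \<open>B\<close> gives the bound
  for \<open>B\<close>.\<close>

section \<open>Conjugate transpose and unitary matrices\<close>

lemma mat_adjoint_eq_mat:
  "mat_adjoint A = mat (dim_col A) (dim_row A) (\<lambda>(i,j). conjugate (A $$ (j,i)))"
  unfolding mat_adjoint_def by (rule eq_matI) (auto simp: mat_of_rows_def col_def)

lemma dim_mat_adjoint[simp]:
  "dim_row (mat_adjoint A) = dim_col A" "dim_col (mat_adjoint A) = dim_row A"
  unfolding mat_adjoint_eq_mat by simp_all

lemma mat_adjoint_carrier[simp]: "A \<in> carrier_mat n m \<Longrightarrow> mat_adjoint A \<in> carrier_mat m n"
  unfolding carrier_mat_def by simp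

lemma index_mat_adjoint[simp]:
  "i < dim_col A \<Longrightarrow> j < dim_row A \<Longrightarrow> mat_adjoint A $$ (i,j) = conjugate (A $$ (j,i))"
  unfolding mat_adjoint_eq_mat by simp

lemma row_mat_adjoint: "i < dim_col A \<Longrightarrow> row (mat_adjoint A) i = conjugate (col A i)"
  by (rule eq_vecI) auto

lemma mat_adjoint_adjoint[simp]: "mat_adjoint (mat_adjoint (A :: 'a :: conjugatable_field mat)) = A"
  by (rule eq_matI) auto

lemma mat_adjoint_one[simp]: "mat_adjoint (1\<^sub>m n :: complex mat) = 1\<^sub>m n"
  by (rule eq_matI) auto

lemma mat_adjoint_zero[simp]: "mat_adjoint (0\<^sub>m n m :: complex mat) = 0\<^sub>m m n"
  by (rule eq_matI) auto

lemma mat_adjoint_mult: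
  fixes A B :: "'a :: conjugatable_field mat"
  assumes A: "A \<in> carrier_mat n m" and B: "B \<in> carrier_mat m l"
  shows "mat_adjoint (A * B) = mat_adjoint B * mat_adjoint A"
proof (rule eq_matI)
  fix i j assume "i < dim_row (mat_adjoint B * mat_adjoint A)" "j < dim_col (mat_adjoint B * mat_adjoint A)"
  hence i: "i < l" and j: "j < n" using A B by auto
  have "mat_adjoint (A * B) $$ (i, j) = conjugate (\<Sum>k\<in>{0..<m}. A $$ (j,k) * B $$ (k,i))"
    using A B i j by (simp add: scalar_prod_def)
  also have "\<dots> = (\<Sum>k\<in>{0..<m}. conjugate (B $$ (k,i)) * conjugate (A $$ (j,k)))"
    by (simp add: sum_conjugate conjugate_dist_mul mult.commute)
  also have "\<dots> = (mat_adjoint B * mat_adjoint A) $$ (i, j)"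
    using A B i j by (simp add: scalar_prod_def)
  finally show "mat_adjoint (A * B) $$ (i, j) = (mat_adjoint B * mat_adjoint A) $$ (i, j)" .
qed (use A B in auto)

lemma mat_adjoint_four_block_mat:
  fixes A B C D :: "complex mat"
  assumes "A \<in> carrier_mat n1 m1" "B \<in> carrier_mat n1 m2" "C \<in> carrier_mat n2 m1" "D \<in> carrier_mat n2 m2"
  shows "mat_adjoint (four_block_mat A B C D) =
    four_block_mat (mat_adjoint A) (mat_adjoint C) (mat_adjoint B) (mat_adjoint D)"
  by (rule eq_matI) (use assms in auto)

lemma mat_adjoint_mult_vec_scalar_prod:
  fixes M :: "'a :: conjugatable_field mat"
  assumes M: "M \<in> carrier_mat n m" and y: "y \<in> carrier_vec n" and v: "v \<in> carrier_vec m"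
  shows "(mat_adjoint M *\<^sub>v y) \<bullet> conjugate v = y \<bullet> conjugate (M *\<^sub>v v)"
proof -
  have "(mat_adjoint M *\<^sub>v y) \<bullet> conjugate v
      = (\<Sum>i<m. (\<Sum>j<n. conjugate (M $$ (j,i)) * y $ j) * conjugate (v $ i))"
    using M y v by (auto simp: scalar_prod_def mult_mat_vec_def row_def atLeast0LessThan intro!: sum.cong)
  also have "\<dots> = (\<Sum>j<n. \<Sum>i<m. conjugate (M $$ (j,i)) * y $ j * conjugate (v $ i))"
    by (simp add: sum_distrib_right sum.swap[of _ "{..<m}"])
  also have "\<dots> = (\<Sum>j<n. y $ j * conjugate (\<Sum>i<m. M $$ (j,i) * v $ i))"
    by (simp add: sum_distrib_left sum_conjugate conjugate_dist_mul mult_ac)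
  also have "\<dots> = y \<bullet> conjugate (M *\<^sub>v v)"
    using M y v by (auto simp: scalar_prod_def mult_mat_vec_def row_def atLeast0LessThan intro!: sum.cong)
  finally show ?thesis .
qed

lemma quad_form_adjoint_sandwich:
  assumes A: "A \<in> carrier_mat n n" and M: "M \<in> carrier_mat n n" and v: "v \<in> carrier_vec n"
  shows "((mat_adjoint A * M * A) *\<^sub>v v) \<bullet> conjugate v
    = (M *\<^sub>v (A *\<^sub>v v)) \<bullet> conjugate (A *\<^sub>v v)"
proof -
  have "(mat_adjoint A * M * A) *\<^sub>v v = (mat_adjoint A * M) *\<^sub>v (A *\<^sub>v v)"
    by (rule assoc_mult_mat_vec[of _ n n _ n]) (use A M v in auto)
  also have "\<dots> = mat_adjoint A *\<^sub>v (M *\<^sub>v (A *\<^sub>v v))"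
    by (rule assoc_mult_mat_vec[of _ n n _ n]) (use A M v in auto)
  finally have "(mat_adjoint A * M * A) *\<^sub>v v = mat_adjoint A *\<^sub>v (M *\<^sub>v (A *\<^sub>v v))" .
  thus ?thesis using mat_adjoint_mult_vec_scalar_prod[OF A _ v, of "M *\<^sub>v (A *\<^sub>v v)"] A M v by simp
qed

lemma unitary_mat_carrier: "unitary_mat n U \<Longrightarrow> U \<in> carrier_mat n n"
  unfolding unitary_mat_def by auto

lemma unitary_mat_adjoint_mult: "unitary_mat n U \<Longrightarrow> mat_adjoint U * U = 1\<^sub>m n"
  unfolding unitary_mat_def by auto

lemma unitary_mat_mult_adjoint: "unitary_mat n U \<Longrightarrow> U * mat_adjoint U = 1\<^sub>m n"
  using mat_mult_left_right_inverse[of "mat_adjoint U" n U] unfolding unitary_mat_def by auto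

lemma unitary_mat_mult:
  assumes U: "unitary_mat n U" and V: "unitary_mat n V"
  shows "unitary_mat n (U * V)"
proof -
  have c: "U \<in> carrier_mat n n" "V \<in> carrier_mat n n" using U V by (auto simp: unitary_mat_carrier)
  have "mat_adjoint (U * V) * (U * V) = mat_adjoint V * ((mat_adjoint U * U) * V)"
    using c by (simp add: mat_adjoint_mult[of _ n n _ n] assoc_mult_mat[of _ n n _ n _ n])
  also have "\<dots> = 1\<^sub>m n" using c U V by (simp add: unitary_mat_adjoint_mult)
  finally show ?thesis using c unfolding unitary_mat_def by auto
qed

lemma unitary_mat_four_block_mat:
  assumes V: "unitary_mat m V"
  shows "unitary_mat (Suc m) (four_block_mat (1\<^sub>m 1) (0\<^sub>m 1 m) (0\<^sub>m m 1) V)"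
proof -
  have Vc: "V \<in> carrier_mat m m" using V by (rule unitary_mat_carrier)
  have "mat_adjoint (four_block_mat (1\<^sub>m 1) (0\<^sub>m 1 m) (0\<^sub>m m 1) V)
      * four_block_mat (1\<^sub>m 1) (0\<^sub>m 1 m) (0\<^sub>m m 1) V = 1\<^sub>m (Suc m)"
    using Vc unitary_mat_adjoint_mult[OF V] by (simp add: mat_adjoint_four_block_mat[of _ 1 1 _ m _ m]
        mult_four_block_mat[of _ 1 1 _ m _ m _ _ 1 _ m])
  then show ?thesis using Vc unfolding unitary_mat_def by auto
qed

lemma unitary_mat_mult_vec_unit_vec:
  assumes U: "unitary_mat n U" and i: "i < n"
  shows "mat_adjoint U *\<^sub>v (U *\<^sub>v unit_vec n i) = unit_vec n i" "U *\<^sub>v unit_vec n i \<noteq> 0\<^sub>v n"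
proof -
  have Uc: "U \<in> carrier_mat n n" using U by (rule unitary_mat_carrier)
  have "mat_adjoint U *\<^sub>v (U *\<^sub>v unit_vec n i) = (mat_adjoint U * U) *\<^sub>v unit_vec n i"
    by (rule assoc_mult_mat_vec[symmetric, of _ n n _ n]) (use Uc in auto)
  thus inverse: "mat_adjoint U *\<^sub>v (U *\<^sub>v unit_vec n i) = unit_vec n i"
    using unitary_mat_adjoint_mult[OF U] by simp
  show "U *\<^sub>v unit_vec n i \<noteq> 0\<^sub>v n"
  proof
    assume "U *\<^sub>v unit_vec n i = 0\<^sub>v n"
    hence "unit_vec n i $ i = (mat_adjoint U *\<^sub>v 0\<^sub>v n) $ i" using inverse by simp
    also have "\<dots> = 0" using i Uc by simp
    finally show False using i by simp
  qed
qed

lemma diag_of_carrier[simp]: "diag_of n f \<in> carrier_mat n n"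
  and dim_diag_of[simp]: "dim_row (diag_of n f) = n" "dim_col (diag_of n f) = n"
  and index_diag_of[simp]: "i < n \<Longrightarrow> j < n \<Longrightarrow> diag_of n f $$ (i,j) = (if i = j then f i else 0)"
  by (simp_all add: diag_of_def)

lemma diag_of_mult_left:
  assumes "M \<in> carrier_mat n m" "i < n" "j < m"
  shows "(diag_of n f * M) $$ (i,j) = f i * M $$ (i,j)"
proof -
  have "(diag_of n f * M) $$ (i,j) = (\<Sum>k\<in>{0..<n}. (if i = k then f i else 0) * M $$ (k,j))"
    using assms by (simp add: scalar_prod_def)
  also have "\<dots> = (\<Sum>k\<in>{0..<n}. if k = i then f i * M $$ (k,j) else 0)"
    by (rule sum.cong) auto
  finally show ?thesis using assms(2) by simp
qed

lemma diag_of_mult_right: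
  assumes "M \<in> carrier_mat m n" "i < m" "j < n"
  shows "(M * diag_of n f) $$ (i,j) = M $$ (i,j) * f j"
proof -
  have "(M * diag_of n f) $$ (i,j) = (\<Sum>k\<in>{0..<n}. M $$ (i,k) * (if k = j then f k else 0))"
    using assms by (simp add: scalar_prod_def)
  also have "\<dots> = (\<Sum>k\<in>{0..<n}. if k = j then M $$ (i,k) * f j else 0)"
    by (rule sum.cong) auto
  finally show ?thesis using assms(3) by simp
qed

lemma diag_of_mult_vec:
  assumes w: "w \<in> carrier_vec n"
  shows "diag_of n f *\<^sub>v w = vec n (\<lambda>i. f i * w $ i)"
proof (rule eq_vecI)
  fix i assume "i < dim_vec (vec n (\<lambda>i. f i * w $ i))"
  hence i: "i < n" by simp
  have "(diag_of n f *\<^sub>v w) $ i = (\<Sum>k\<in>{0..<n}. (if i = k then f i else 0) * w $ k)"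
    using w i by (simp add: scalar_prod_def)
  also have "\<dots> = (\<Sum>k\<in>{0..<n}. if k = i then f i * w $ k else 0)"
    by (rule sum.cong) auto
  finally show "(diag_of n f *\<^sub>v w) $ i = vec n (\<lambda>i. f i * w $ i) $ i" using i by simp
qed simp

lemma quad_form_diag_of:
  assumes w: "w \<in> carrier_vec n"
  shows "(diag_of n (\<lambda>i. complex_of_real (g i)) *\<^sub>v w) \<bullet> conjugate w
     = complex_of_real (\<Sum>i<n. g i * (cmod (w $ i))\<^sup>2)"
proof -
  have "(diag_of n (\<lambda>i. complex_of_real (g i)) *\<^sub>v w) \<bullet> conjugate w
     = (\<Sum>i\<in>{0..<n}. complex_of_real (g i * (cmod (w $ i))\<^sup>2))"
    using w by (auto simp: diag_of_mult_vec scalar_prod_def complex_norm_square[symmetric] mult.assoc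
        intro!: sum.cong)
  thus ?thesis by (simp add: atLeast0LessThan)
qed

lemma scalar_prod_conjugate_self:
  "w \<in> carrier_vec n \<Longrightarrow> w \<bullet> conjugate w = complex_of_real (\<Sum>i<n. (cmod (w $ i))\<^sup>2)"
  by (auto simp: scalar_prod_def complex_norm_square[symmetric] atLeast0LessThan intro!: sum.cong)

definition vec_normalize :: "complex vec \<Rightarrow> complex vec" where
  "vec_normalize w = complex_of_real (1 / sqrt (Re (w \<bullet>c w))) \<cdot>\<^sub>v w"

lemma vec_normalize_carrier[simp]: "w \<in> carrier_vec n \<Longrightarrow> vec_normalize w \<in> carrier_vec n"
  by (simp add: vec_normalize_def)

lemma vec_normalize_scalar_prod:
  assumes "a \<in> carrier_vec n" "b \<in> carrier_vec n"
  shows "vec_normalize a \<bullet>c vec_normalize b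
    = complex_of_real (1 / sqrt (Re (a \<bullet>c a)) * (1 / sqrt (Re (b \<bullet>c b)))) * (a \<bullet>c b)"
  using assms by (simp add: vec_normalize_def conjugate_smult_vec)

lemma vec_normalize_unit:
  assumes a: "a \<in> carrier_vec n" "a \<noteq> 0\<^sub>v n"
  shows "vec_normalize a \<bullet>c vec_normalize a = 1"
proof -
  define r where "r = Re (a \<bullet>c a)"
  have "a \<bullet>c a > 0" using a by simp
  hence r: "r > 0" "a \<bullet>c a = complex_of_real r"
    unfolding r_def by (auto simp: less_complex_def complex_eq_iff)
  have "1 / sqrt r * (1 / sqrt r) * r = 1" using r(1) by (simp add: field_simps)
  thus ?thesis unfolding vec_normalize_scalar_prod[OF a(1) a(1)] r(2) r_def[symmetric]
    by (simp flip: of_real_mult)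
qed

lemma unitary_mat_with_first_col:
  fixes u :: "complex vec"
  assumes u: "u \<in> carrier_vec n" and u1: "u \<bullet>c u = 1"
  shows "\<exists>W. unitary_mat n W \<and> col W 0 = u"
proof -
  have u0: "u \<noteq> 0\<^sub>v n" using u1 u by auto
  interpret cof_vec_space n "TYPE(complex)" .
  define b where "b = basis_completion u"
  note bc = basis_completion[OF u u0, folded b_def]
  define ws where "ws = gram_schmidt n b"
  note gs = gram_schmidt_result[OF bc(2) bc(4) bc(5) ws_def]
  have "b = u # tl b" unfolding b_def basis_completion_def Let_def by simp
  hence hd: "hd ws = u" unfolding ws_def using u by (metis gram_schmidt_hd)
  have len: "length ws = n" using gs bc by simp
  have ws: "ws ! i \<in> carrier_vec n" "ws ! i \<noteq> 0\<^sub>v n" if "i < n" for i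
    using gs len that corthogonalD[OF gs(2), of i i] by auto
  define W where "W = mat_of_cols n (map vec_normalize ws)"
  have W: "W \<in> carrier_mat n n" unfolding W_def using len by auto
  have col: "col W i = vec_normalize (ws ! i)" if "i < n" for i
    unfolding W_def using ws that len by (subst col_mat_of_cols) auto
  have "mat_adjoint W * W = 1\<^sub>m n"
  proof (rule eq_matI)
    fix i j assume "i < dim_row (1\<^sub>m n :: complex mat)" "j < dim_col (1\<^sub>m n :: complex mat)"
    hence i: "i < n" and j: "j < n" by auto
    have "(mat_adjoint W * W) $$ (i,j) = vec_normalize (ws ! j) \<bullet>c vec_normalize (ws ! i)"
      using W i j ws by (simp add: row_mat_adjoint col comm_scalar_prod[of _ n])
    also have "\<dots> = 1\<^sub>m n $$ (i,j)"
      using vec_normalize_unit[OF ws[OF i]] vec_normalize_scalar_prod[OF ws(1)[OF j] ws(1)[OF i]]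
        corthogonalD[OF gs(2), of j i] i j len by auto
    finally show "(mat_adjoint W * W) $$ (i,j) = 1\<^sub>m n $$ (i,j)" .
  qed (use W in auto)
  moreover have "n > 0" using len hd u0 u by (cases ws) auto
  hence "col W 0 = u"
    using col hd len u1 by (cases ws) (auto simp: vec_normalize_def)
  ultimately show ?thesis using W unfolding unitary_mat_def by blast
qed

section \<open>Spectral theorem for Hermitian matrices\<close>

lemma mat_adjoint_sandwich:
  assumes A: "A \<in> carrier_mat n n" and W: "W \<in> carrier_mat n m"
  shows "mat_adjoint (mat_adjoint W * A * W) = mat_adjoint W * mat_adjoint A * W"
proof -
  have "mat_adjoint (mat_adjoint W * A * W) = mat_adjoint W * mat_adjoint (mat_adjoint W * A)"
    by (rule mat_adjoint_mult[of _ m n _ m]) (use A W in auto)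
  also have "mat_adjoint (mat_adjoint W * A) = mat_adjoint A * W"
    by (subst mat_adjoint_mult[of _ m n _ n]) (use A W in auto)
  finally show ?thesis using A W by (simp add: assoc_mult_mat[of _ m n _ n _ m])
qed

lemma hermitian_first_col_block:
  assumes A: "A \<in> carrier_mat (Suc m) (Suc m)" "mat_adjoint A = A"
    and col: "col A 0 = e \<cdot>\<^sub>v unit_vec (Suc m) 0"
  shows "\<exists>A3 \<in> carrier_mat m m. mat_adjoint A3 = A3 \<and>
    A = four_block_mat (mat 1 1 (\<lambda>_. e)) (0\<^sub>m 1 m) (0\<^sub>m m 1) A3"
proof -
  have entry: "A $$ (i, j) = conjugate (A $$ (j, i))" if "i < Suc m" "j < Suc m" for i j
    using A that by (metis index_mat_adjoint carrier_matD)
  have col0: "A $$ (i, 0) = (if i = 0 then e else 0)" if "i < Suc m" for i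
    using arg_cong[OF col, of "\<lambda>v. v $ i"] A that by auto
  define A3 where "A3 = mat m m (\<lambda>(i,j). A $$ (Suc i, Suc j))"
  have "mat_adjoint A3 = A3"
  proof (rule eq_matI)
    fix i j assume "i < dim_row A3" "j < dim_col A3"
    thus "mat_adjoint A3 $$ (i, j) = A3 $$ (i, j)" using entry[of "Suc i" "Suc j"] by (simp add: A3_def)
  qed (simp_all add: A3_def)
  moreover have "A = four_block_mat (mat 1 1 (\<lambda>_. e)) (0\<^sub>m 1 m) (0\<^sub>m m 1) A3"
  proof (rule eq_matI)
    fix i j assume "i < dim_row (four_block_mat (mat 1 1 (\<lambda>_. e)) (0\<^sub>m 1 m) (0\<^sub>m m 1) A3)"
      "j < dim_col (four_block_mat (mat 1 1 (\<lambda>_. e)) (0\<^sub>m 1 m) (0\<^sub>m m 1) A3)"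
    hence i: "i < Suc m" and j: "j < Suc m" by (auto simp: A3_def)
    consider "j = 0" | "i = 0" "j > 0" | "i > 0" "j > 0" by blast
    thus "A $$ (i, j) = four_block_mat (mat 1 1 (\<lambda>_. e)) (0\<^sub>m 1 m) (0\<^sub>m m 1) A3 $$ (i, j)"
    proof cases
      case 1
      thus ?thesis using col0[OF i] i by (simp add: A3_def)
    next
      case 2
      thus ?thesis using entry[OF i j] col0[OF j] j by (simp add: A3_def)
    next
      case 3
      thus ?thesis using i j by (simp add: A3_def)
    qed
  qed (use A in \<open>auto simp: A3_def\<close>)
  ultimately show ?thesis unfolding A3_def by auto
qed

lemma four_block_diag_mat_conj:
  fixes A1 A3 V :: "complex mat"
  assumes A1: "A1 \<in> carrier_mat 1 1" and A3: "A3 \<in> carrier_mat m m" and V: "V \<in> carrier_mat m m"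
  defines "F \<equiv> four_block_mat (1\<^sub>m 1) (0\<^sub>m 1 m) (0\<^sub>m m 1) V"
  shows "mat_adjoint F * four_block_mat A1 (0\<^sub>m 1 m) (0\<^sub>m m 1) A3 * F
    = four_block_mat A1 (0\<^sub>m 1 m) (0\<^sub>m m 1) (mat_adjoint V * A3 * V)"
proof -
  have VA3: "mat_adjoint V * A3 \<in> carrier_mat m m" using mat_adjoint_carrier[OF V] A3 by simp
  have "mat_adjoint F * four_block_mat A1 (0\<^sub>m 1 m) (0\<^sub>m m 1) A3
      = four_block_mat A1 (0\<^sub>m 1 m) (0\<^sub>m m 1) (mat_adjoint V * A3)"
    unfolding F_def using A1 A3 V VA3
    by (simp add: mat_adjoint_four_block_mat[of _ 1 1 _ m _ m] mult_four_block_mat[of _ 1 1 _ m _ m _ _ 1 _ m])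
  thus ?thesis
    unfolding F_def using A1 V VA3
    by (simp add: right_mult_zero_mat[OF VA3] mult_four_block_mat[of _ 1 1 _ m _ m _ _ 1 _ m])
qed

lemma diagonal_four_block_mat:
  assumes "A1 \<in> carrier_mat 1 1" "D \<in> carrier_mat m m" "diagonal_mat D"
  shows "diagonal_mat (four_block_mat A1 (0\<^sub>m 1 m) (0\<^sub>m m 1) D)"
  using assms unfolding diagonal_mat_def by auto

lemma unitary_conj_first_col:
  assumes W: "unitary_mat n W" and A: "A \<in> carrier_mat n n" and n: "n > 0"
    and eig: "A *\<^sub>v col W 0 = e \<cdot>\<^sub>v col W 0"
  shows "col (mat_adjoint W * A * W) 0 = e \<cdot>\<^sub>v unit_vec n 0"
proof -
  have Wc: "W \<in> carrier_mat n n" using W by (rule unitary_mat_carrier)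
  have "col (mat_adjoint W * A * W) 0 = (mat_adjoint W * A) *\<^sub>v col W 0"
    by (rule col_mult2[of _ n n]) (use Wc A n in auto)
  also have "\<dots> = mat_adjoint W *\<^sub>v (A *\<^sub>v col W 0)"
    by (rule assoc_mult_mat_vec[of _ n n _ n]) (use Wc A n in auto)
  also have "\<dots> = e \<cdot>\<^sub>v (mat_adjoint W *\<^sub>v col W 0)"
    unfolding eig by (rule mult_mat_vec[of _ n n]) (use Wc n in auto)
  also have "mat_adjoint W *\<^sub>v col W 0 = col (mat_adjoint W * W) 0"
    by (rule col_mult2[of _ n n, symmetric]) (use Wc n in auto)
  also have "\<dots> = unit_vec n 0" using unitary_mat_adjoint_mult[OF W] n by simp
  finally show ?thesis .
qed

text \<open>Deflation: a unit eigenvector completed to a unitary \<open>W\<close> makes \<open>W* A W\<close> block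
  diagonal, by hermiticity.\<close>

lemma hermitian_unitary_diagonalization:
  fixes A :: "complex mat"
  assumes "A \<in> carrier_mat n n" "mat_adjoint A = A"
  shows "\<exists>U. unitary_mat n U \<and> diagonal_mat (mat_adjoint U * A * U)"
  using assms
proof (induction n arbitrary: A)
  case 0
  have "unitary_mat 0 (1\<^sub>m 0)" unfolding unitary_mat_def by simp
  thus ?case unfolding diagonal_mat_def by auto
next
  case (Suc m A)
  obtain e where "e \<in> spectrum A" using spectrum_non_empty[OF Suc.prems(1)] by auto
  then obtain v where v: "v \<in> carrier_vec (Suc m)" "v \<noteq> 0\<^sub>v (Suc m)" and Av: "A *\<^sub>v v = e \<cdot>\<^sub>v v"
    using Suc.prems unfolding spectrum_def eigenvalue_def eigenvector_def by auto
  obtain W where W: "unitary_mat (Suc m) W" and W0: "col W 0 = vec_normalize v"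
    using unitary_mat_with_first_col[OF vec_normalize_carrier[OF v(1)] vec_normalize_unit[OF v]] by blast
  have Wc: "W \<in> carrier_mat (Suc m) (Suc m)" using W by (rule unitary_mat_carrier)
  have "A *\<^sub>v col W 0 = e \<cdot>\<^sub>v col W 0"
    unfolding W0 vec_normalize_def using Suc.prems(1) v Av by (simp add: mult_mat_vec smult_smult_assoc mult.commute)
  hence col0: "col (mat_adjoint W * A * W) 0 = e \<cdot>\<^sub>v unit_vec (Suc m) 0"
    using unitary_conj_first_col[OF W Suc.prems(1)] by simp
  have "mat_adjoint (mat_adjoint W * A * W) = mat_adjoint W * A * W"
    using mat_adjoint_sandwich[OF Suc.prems(1) Wc] Suc.prems(2) by simp
  then obtain A3 where A3: "A3 \<in> carrier_mat m m" "mat_adjoint A3 = A3"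
    and block: "mat_adjoint W * A * W = four_block_mat (mat 1 1 (\<lambda>_. e)) (0\<^sub>m 1 m) (0\<^sub>m m 1) A3"
    using hermitian_first_col_block[OF _ _ col0] Wc Suc.prems(1) by fastforce
  obtain V where V: "unitary_mat m V" and D: "diagonal_mat (mat_adjoint V * A3 * V)"
    using Suc.IH[OF A3] by blast
  define F where "F = four_block_mat (1\<^sub>m 1) (0\<^sub>m 1 m) (0\<^sub>m m 1) V"
  have F: "unitary_mat (Suc m) F" unfolding F_def by (rule unitary_mat_four_block_mat[OF V])
  have Fc: "F \<in> carrier_mat (Suc m) (Suc m)" using F by (rule unitary_mat_carrier)
  have Vc: "V \<in> carrier_mat m m" using V by (rule unitary_mat_carrier)
  have "mat_adjoint (W * F) * A * (W * F) = mat_adjoint F * (mat_adjoint W * A * W) * F"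
    using Wc Fc Suc.prems(1) by (simp add: mat_adjoint_mult[of _ "Suc m" "Suc m" _ "Suc m"]
        assoc_mult_mat[of _ "Suc m" "Suc m" _ "Suc m" _ "Suc m"] mult_carrier_mat[of _ "Suc m" "Suc m"])
  also have "\<dots> = four_block_mat (mat 1 1 (\<lambda>_. e)) (0\<^sub>m 1 m) (0\<^sub>m m 1) (mat_adjoint V * A3 * V)"
    unfolding block F_def by (rule four_block_diag_mat_conj[OF _ A3(1) Vc]) simp
  moreover have "mat_adjoint V * A3 * V \<in> carrier_mat m m"
    using Vc A3(1) by (metis mat_adjoint_carrier mult_carrier_mat)
  ultimately have "diagonal_mat (mat_adjoint (W * F) * A * (W * F))"
    using diagonal_four_block_mat[OF _ _ D, of "mat 1 1 (\<lambda>_. e)"] by simp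
  thus ?case using unitary_mat_mult[OF W F] by blast
qed

section \<open>Functional calculus of positive definite matrices\<close>

definition spectral_mat :: "nat \<Rightarrow> complex mat \<Rightarrow> (nat \<Rightarrow> real) \<Rightarrow> complex mat" where
  "spectral_mat n U d = U * diag_of n (\<lambda>i. complex_of_real (d i)) * mat_adjoint U"

lemma spectral_mat_carrier[simp]: "unitary_mat n U \<Longrightarrow> spectral_mat n U d \<in> carrier_mat n n"
  unfolding spectral_mat_def using unitary_mat_carrier by fastforce

lemma unitary_mat_cancel:
  assumes U: "unitary_mat n U" and Z: "Z \<in> carrier_mat n m"
  shows "U * (mat_adjoint U * Z) = Z" "mat_adjoint U * (U * Z) = Z"
proof -
  have Uc: "U \<in> carrier_mat n n" using U by (rule unitary_mat_carrier)
  have "U * (mat_adjoint U * Z) = (U * mat_adjoint U) * Z"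
    by (rule assoc_mult_mat[symmetric, of _ n n _ n _ m]) (use Uc Z in auto)
  thus "U * (mat_adjoint U * Z) = Z" using unitary_mat_mult_adjoint[OF U] Z by simp
  have "mat_adjoint U * (U * Z) = (mat_adjoint U * U) * Z"
    by (rule assoc_mult_mat[symmetric, of _ n n _ n _ m]) (use Uc Z in auto)
  thus "mat_adjoint U * (U * Z) = Z" using unitary_mat_adjoint_mult[OF U] Z by simp
qed

lemma unitary_mat_conj_cancel:
  assumes U: "unitary_mat n U" and U': "unitary_mat n U'" and P: "P \<in> carrier_mat n n"
  shows "U * (mat_adjoint U * P * U') * mat_adjoint U' = P"
proof -
  have c: "U \<in> carrier_mat n n" "U' \<in> carrier_mat n n" using U U' by (auto simp: unitary_mat_carrier)
  have "U * (mat_adjoint U * P * U') * mat_adjoint U' = U * (mat_adjoint U * (P * (U' * mat_adjoint U')))"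
    using c P by (simp add: assoc_mult_mat[of _ n n _ n _ n] mult_carrier_mat[of _ n n _ n])
  also have "\<dots> = P" using unitary_mat_mult_adjoint[OF U'] unitary_mat_cancel(1)[OF U P] P by simp
  finally show ?thesis .
qed

lemma spectral_mat_conj:
  assumes U: "unitary_mat n U" and U': "unitary_mat n U'"
  shows "mat_adjoint U * spectral_mat n U g * U' = diag_of n (\<lambda>i. complex_of_real (g i)) * (mat_adjoint U * U')"
    and "mat_adjoint U * spectral_mat n U' g * U' = (mat_adjoint U * U') * diag_of n (\<lambda>i. complex_of_real (g i))"
proof -
  have c: "U \<in> carrier_mat n n" "U' \<in> carrier_mat n n" "mat_adjoint U \<in> carrier_mat n n"
    "mat_adjoint U' \<in> carrier_mat n n" using U U' by (auto simp: unitary_mat_carrier)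
  define G where "G = diag_of n (\<lambda>i. complex_of_real (g i))"
  have G: "G \<in> carrier_mat n n" unfolding G_def by simp
  have "mat_adjoint U * spectral_mat n U g * U' = mat_adjoint U * (U * (G * (mat_adjoint U * U')))"
    unfolding spectral_mat_def G_def[symmetric] using c G
    by (simp add: assoc_mult_mat[of _ n n _ n _ n] mult_carrier_mat[of _ n n _ n])
  also have "\<dots> = G * (mat_adjoint U * U')"
    by (rule unitary_mat_cancel(2)[OF U mult_carrier_mat[OF G mult_carrier_mat[OF c(3) c(2)]]])
  finally show "mat_adjoint U * spectral_mat n U g * U'
      = diag_of n (\<lambda>i. complex_of_real (g i)) * (mat_adjoint U * U')"
    unfolding G_def .
  have "mat_adjoint U * spectral_mat n U' g * U' = mat_adjoint U * (U' * (G * (mat_adjoint U' * U')))"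
    unfolding spectral_mat_def G_def[symmetric] using c G
    by (simp add: assoc_mult_mat[of _ n n _ n _ n] mult_carrier_mat[of _ n n _ n])
  also have "\<dots> = (mat_adjoint U * U') * G" using c G unitary_mat_adjoint_mult[OF U']
    by (simp add: assoc_mult_mat[of _ n n _ n _ n])
  finally show "mat_adjoint U * spectral_mat n U' g * U'
      = (mat_adjoint U * U') * diag_of n (\<lambda>i. complex_of_real (g i))"
    unfolding G_def .
qed

text \<open>This makes \<open>mat_rpow\<close> independent of the representation picked by \<open>SOME\<close> in its
  definition.\<close>

lemma spectral_mat_functional_calculus:
  assumes U: "unitary_mat n U" and U': "unitary_mat n U'"
    and eq: "spectral_mat n U d = spectral_mat n U' d'"
  shows "spectral_mat n U (f \<circ> d) = spectral_mat n U' (f \<circ> d')"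
proof -
  define W where "W = mat_adjoint U * U'"
  have W: "W \<in> carrier_mat n n"
    unfolding W_def using U U' by (simp add: mult_carrier_mat[of _ n n] unitary_mat_carrier)
  have comm: "diag_of n (\<lambda>i. complex_of_real (d i)) * W = W * diag_of n (\<lambda>i. complex_of_real (d' i))"
    using arg_cong[OF eq, of "\<lambda>M. mat_adjoint U * M * U'"] unfolding spectral_mat_conj[OF U U'] W_def .
  have "diag_of n (\<lambda>i. complex_of_real ((f \<circ> d) i)) * W
      = W * diag_of n (\<lambda>i. complex_of_real ((f \<circ> d') i))"
  proof (rule eq_matI)
    fix i j assume "i < dim_row (W * diag_of n (\<lambda>i. complex_of_real ((f \<circ> d') i)))"
      "j < dim_col (W * diag_of n (\<lambda>i. complex_of_real ((f \<circ> d') i)))"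
    hence ij: "i < n" "j < n" using W by auto
    have "complex_of_real (d i) * W $$ (i,j) = W $$ (i,j) * complex_of_real (d' j)"
      using arg_cong[OF comm, of "\<lambda>M. M $$ (i,j)"] diag_of_mult_left[OF W ij] diag_of_mult_right[OF W ij]
      by simp
    hence "W $$ (i,j) = 0 \<or> d i = d' j" by (auto simp: mult.commute)
    thus "(diag_of n (\<lambda>i. complex_of_real ((f \<circ> d) i)) * W) $$ (i,j)
        = (W * diag_of n (\<lambda>i. complex_of_real ((f \<circ> d') i))) $$ (i,j)"
      using diag_of_mult_left[OF W ij] diag_of_mult_right[OF W ij] by auto
  qed (use W in auto)
  hence "mat_adjoint U * spectral_mat n U (f \<circ> d) * U' = mat_adjoint U * spectral_mat n U' (f \<circ> d') * U'"
    unfolding spectral_mat_conj[OF U U'] W_def .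
  hence "U * (mat_adjoint U * spectral_mat n U (f \<circ> d) * U') * mat_adjoint U'
      = U * (mat_adjoint U * spectral_mat n U' (f \<circ> d') * U') * mat_adjoint U'" by simp
  thus ?thesis
    by (simp only: unitary_mat_conj_cancel[OF U U'] spectral_mat_carrier[OF U] spectral_mat_carrier[OF U'])
qed

lemma hermitian_spectral_decomposition:
  assumes "hermitian_mat n A"
  shows "\<exists>U d. unitary_mat n U \<and> A = spectral_mat n U d"
proof -
  have A: "A \<in> carrier_mat n n" "mat_adjoint A = A" using assms unfolding hermitian_mat_def by auto
  obtain U where U: "unitary_mat n U" and diag: "diagonal_mat (mat_adjoint U * A * U)"
    using hermitian_unitary_diagonalization[OF A] by blast
  have Uc: "U \<in> carrier_mat n n" using U by (rule unitary_mat_carrier)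
  define D where "D = mat_adjoint U * A * U"
  have Dc: "D \<in> carrier_mat n n" unfolding D_def using Uc A by auto
  have hD: "mat_adjoint D = D" unfolding D_def using mat_adjoint_sandwich[OF A(1) Uc] A(2) by simp
  define d where "d i = Re (D $$ (i,i))" for i
  have "D = diag_of n (\<lambda>i. complex_of_real (d i))"
  proof (rule eq_matI)
    fix i j assume "i < dim_row (diag_of n (\<lambda>i. complex_of_real (d i)))"
      "j < dim_col (diag_of n (\<lambda>i. complex_of_real (d i)))"
    hence i: "i < n" and j: "j < n" by auto
    have "D $$ (i,i) = cnj (D $$ (i,i))" using arg_cong[OF hD, of "\<lambda>M. M $$ (i,i)"] i Dc by simp
    hence "D $$ (i,i) = complex_of_real (d i)" unfolding d_def by (simp add: complex_eq_iff)
    thus "D $$ (i, j) = diag_of n (\<lambda>i. complex_of_real (d i)) $$ (i, j)"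
      using diag i j Dc unfolding D_def diagonal_mat_def by auto
  qed (use Dc in auto)
  hence "A = spectral_mat n U d"
    unfolding spectral_mat_def D_def[symmetric] using unitary_mat_conj_cancel[OF U U A(1)] D_def by simp
  thus ?thesis using U by blast
qed

lemma quad_form_spectral_mat:
  assumes U: "unitary_mat n U" and v: "v \<in> carrier_vec n"
  shows "(spectral_mat n U g *\<^sub>v v) \<bullet> conjugate v
    = complex_of_real (\<Sum>k<n. g k * (cmod ((mat_adjoint U *\<^sub>v v) $ k))\<^sup>2)"
proof -
  have Uc: "U \<in> carrier_mat n n" using U by (rule unitary_mat_carrier)
  define G where "G = diag_of n (\<lambda>i. complex_of_real (g i))"
  have G: "G \<in> carrier_mat n n" unfolding G_def by simp
  have "spectral_mat n U g = mat_adjoint (mat_adjoint U) * G * mat_adjoint U"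
    unfolding spectral_mat_def G_def by simp
  hence "(spectral_mat n U g *\<^sub>v v) \<bullet> conjugate v
      = (G *\<^sub>v (mat_adjoint U *\<^sub>v v)) \<bullet> conjugate (mat_adjoint U *\<^sub>v v)"
    using quad_form_adjoint_sandwich[OF mat_adjoint_carrier[OF Uc] G v] by simp
  also have "\<dots> = complex_of_real (\<Sum>k<n. g k * (cmod ((mat_adjoint U *\<^sub>v v) $ k))\<^sup>2)"
    unfolding G_def by (rule quad_form_diag_of[OF mult_mat_vec_carrier[OF mat_adjoint_carrier[OF Uc] v]])
  finally show ?thesis .
qed

lemma unitary_mat_adjoint_mult_vec_norm:
  assumes U: "unitary_mat n U" and v: "v \<in> carrier_vec n"
  shows "(\<Sum>k<n. (cmod ((mat_adjoint U *\<^sub>v v) $ k))\<^sup>2) = (\<Sum>k<n. (cmod (v $ k))\<^sup>2)"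
proof -
  have Uc: "U \<in> carrier_mat n n" using U by (rule unitary_mat_carrier)
  have "(mat_adjoint U *\<^sub>v v) \<bullet> conjugate (mat_adjoint U *\<^sub>v v)
      = v \<bullet> conjugate (U *\<^sub>v (mat_adjoint U *\<^sub>v v))"
    by (rule mat_adjoint_mult_vec_scalar_prod[OF Uc v mult_mat_vec_carrier[OF mat_adjoint_carrier[OF Uc] v]])
  also have "U *\<^sub>v (mat_adjoint U *\<^sub>v v) = v"
    using Uc v unitary_mat_mult_adjoint[OF U] by (simp add: assoc_mult_mat_vec[symmetric, of _ n n _ n])
  finally have "complex_of_real (\<Sum>k<n. (cmod ((mat_adjoint U *\<^sub>v v) $ k))\<^sup>2)
      = complex_of_real (\<Sum>k<n. (cmod (v $ k))\<^sup>2)"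
    by (simp only: scalar_prod_conjugate_self[OF v]
        scalar_prod_conjugate_self[OF mult_mat_vec_carrier[OF mat_adjoint_carrier[OF Uc] v]])
  thus ?thesis by (simp only: of_real_eq_iff)
qed

lemma sum_unit_vec_weights:
  assumes "i < n"
  shows "(\<Sum>k<n. g k * (cmod (unit_vec n i $ k))\<^sup>2) = g i"
proof -
  have "(\<Sum>k<n. g k * (cmod (unit_vec n i $ k))\<^sup>2) = (\<Sum>k<n. if k = i then g k else 0)"
    by (rule sum.cong) (auto simp: unit_vec_def)
  thus ?thesis using assms by simp
qed

lemma posdef_spectral_decomposition:
  assumes X: "posdef_mat n X"
  shows "\<exists>U d. unitary_mat n U \<and> (\<forall>i<n. d i > 0) \<and> X = spectral_mat n U d"
proof -
  obtain U d where U: "unitary_mat n U" and XU: "X = spectral_mat n U d"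
    using hermitian_spectral_decomposition X unfolding posdef_mat_def by blast
  have "d i > 0" if i: "i < n" for i
  proof -
    define w where "w = U *\<^sub>v unit_vec n i"
    have w: "w \<in> carrier_vec n" unfolding w_def using unitary_mat_carrier[OF U] by simp
    have "Re ((X *\<^sub>v w) \<bullet> conjugate w) > 0"
      using X w unitary_mat_mult_vec_unit_vec[OF U i] unfolding posdef_mat_def Let_def w_def by auto
    also have "(X *\<^sub>v w) \<bullet> conjugate w
        = complex_of_real (\<Sum>k<n. d k * (cmod ((mat_adjoint U *\<^sub>v w) $ k))\<^sup>2)"
      unfolding XU by (rule quad_form_spectral_mat[OF U w])
    also have "(\<Sum>k<n. d k * (cmod ((mat_adjoint U *\<^sub>v w) $ k))\<^sup>2) = d i"
      unfolding w_def unitary_mat_mult_vec_unit_vec(1)[OF U i] by (rule sum_unit_vec_weights[OF i])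
    finally show ?thesis by simp
  qed
  thus ?thesis using U XU by blast
qed

lemma mat_rpow_spectral_mat:
  assumes U: "unitary_mat n U" and d: "\<forall>i<n. d i > 0"
  shows "mat_rpow n (spectral_mat n U d) r = spectral_mat n U (\<lambda>i. d i powr r)"
proof -
  have "\<exists>U' d'. unitary_mat n U' \<and> (\<forall>i<n. d' i > 0) \<and> spectral_mat n U d = spectral_mat n U' d' \<and>
      mat_rpow n (spectral_mat n U d) r = spectral_mat n U' (\<lambda>i. d' i powr r)"
    unfolding mat_rpow_def spectral_mat_def[symmetric]
    by (rule someI_ex[where P = "\<lambda>M. \<exists>U' d'. unitary_mat n U' \<and> (\<forall>i<n. d' i > 0) \<and>
        spectral_mat n U d = spectral_mat n U' d' \<and> M = spectral_mat n U' (\<lambda>i. d' i powr r)"])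
      (use U d in blast)
  then obtain U' d' where U': "unitary_mat n U'" and eq: "spectral_mat n U d = spectral_mat n U' d'"
    and M: "mat_rpow n (spectral_mat n U d) r = spectral_mat n U' (\<lambda>i. d' i powr r)" by blast
  show ?thesis
    using M spectral_mat_functional_calculus[OF U U' eq, of "\<lambda>x. x powr r"] by (simp add: comp_def)
qed

lemma spectral_mat_eigenvalue:
  assumes U: "unitary_mat n U" and k: "k < n"
  shows "complex_of_real (d k) \<in> spectrum (spectral_mat n U d)"
proof -
  have Uc: "U \<in> carrier_mat n n" using U by (rule unitary_mat_carrier)
  define w where "w = U *\<^sub>v unit_vec n k"
  have w: "w \<in> carrier_vec n" unfolding w_def using Uc by simp
  have "diag_of n (\<lambda>i. complex_of_real (d i)) *\<^sub>v unit_vec n k = complex_of_real (d k) \<cdot>\<^sub>v unit_vec n k"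
    by (subst diag_of_mult_vec) (auto intro!: eq_vecI simp: unit_vec_def)
  hence "spectral_mat n U d *\<^sub>v w = complex_of_real (d k) \<cdot>\<^sub>v w"
    unfolding spectral_mat_def w_def using Uc unitary_mat_mult_vec_unit_vec(1)[OF U k]
    by (simp add: assoc_mult_mat_vec[of _ n n _ n] mult_mat_vec[of _ n n])
  moreover have "dim_row (spectral_mat n U d) = n" using spectral_mat_carrier[OF U, of d] by blast
  ultimately show ?thesis using w unitary_mat_mult_vec_unit_vec(2)[OF U k]
    unfolding spectrum_def eigenvalue_def eigenvector_def w_def by auto
qed

lemma lambda_max_ge_eigenvalue:
  assumes "Q \<in> carrier_mat n n" "complex_of_real a \<in> spectrum Q"
  shows "a \<le> lambda_max Q"
proof -
  have "finite (Re ` spectrum Q)" using card_finite_spectrum(1)[OF assms(1)] by simp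
  moreover have "a \<in> Re ` spectrum Q" using assms(2) by force
  ultimately show ?thesis unfolding lambda_max_def by simp
qed

lemma quad_form_le_lambda_max:
  assumes Q: "hermitian_mat n Q" and v: "v \<in> carrier_vec n"
  shows "Re ((Q *\<^sub>v v) \<bullet> conjugate v) \<le> lambda_max Q * (\<Sum>k<n. (cmod (v $ k))\<^sup>2)"
proof -
  obtain U e where U: "unitary_mat n U" and QU: "Q = spectral_mat n U e"
    using hermitian_spectral_decomposition[OF Q] by blast
  have "Re ((Q *\<^sub>v v) \<bullet> conjugate v) = (\<Sum>k<n. e k * (cmod ((mat_adjoint U *\<^sub>v v) $ k))\<^sup>2)"
    unfolding QU quad_form_spectral_mat[OF U v] by simp
  also have "\<dots> \<le> (\<Sum>k<n. lambda_max Q * (cmod ((mat_adjoint U *\<^sub>v v) $ k))\<^sup>2)"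
  proof (intro sum_mono mult_right_mono)
    fix k assume "k \<in> {..<n}"
    thus "e k \<le> lambda_max Q"
      using lambda_max_ge_eigenvalue[of Q n] spectral_mat_eigenvalue[OF U, of k e] QU U by simp
  qed simp
  also have "\<dots> = lambda_max Q * (\<Sum>k<n. (cmod (v $ k))\<^sup>2)"
    by (simp flip: sum_distrib_left add: unitary_mat_adjoint_mult_vec_norm[OF U v])
  finally show ?thesis .
qed

section \<open>Real inequalities\<close>

lemma powr_neg_ge_tangent:
  fixes z r :: real assumes z: "z > 0" and r: "r \<ge> 0"
  shows "1 + r - r * z \<le> z powr (- r)"
proof -
  have "1 - r * ln z \<le> exp (- r * ln z)" using exp_ge_add_one_self[of "- r * ln z"] by simp
  moreover have "r * ln z \<le> r * (z - 1)" using ln_le_minus_one[OF z] r by (rule mult_left_mono)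
  ultimately show ?thesis using z by (simp add: powr_def algebra_simps)
qed

lemma powr_neg_ge_tangent_at:
  fixes x y r :: real assumes x: "x > 0" and y: "y > 0" and r: "r \<ge> 0"
  shows "x powr (- r) * (1 + r - r * (y / x)) \<le> y powr (- r)"
proof -
  have "x powr (- r) * (1 + r - r * (y / x)) \<le> x powr (- r) * (y / x) powr (- r)"
    using powr_neg_ge_tangent[of "y / x" r] x y r by (intro mult_left_mono) auto
  also have "\<dots> = (x * (y / x)) powr (- r)" using powr_mult[of x "y / x" "- r"] x y by simp
  also have "\<dots> = y powr (- r)" using x by simp
  finally show ?thesis .
qed

text \<open>The maximum of \<open>(1 - w) w^q\<close> is attained at \<open>w = q / (q + 1)\<close>, where the tangent
  bound is applied.\<close>

lemma one_minus_mult_powr_le: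
  fixes w q :: real assumes w: "0 < w" "w < 1" and q: "q > 0"
  shows "(1 - w) * w powr q \<le> q powr q / (q + 1) powr (q + 1)"
proof -
  have "(q + 1) * (1 - w) = 1 + q - q * (w * (q + 1) / q)" using q by (simp add: field_simps)
  also have "\<dots> \<le> (w * (q + 1) / q) powr (- q)"
    using w q by (intro powr_neg_ge_tangent) auto
  also have "\<dots> = q powr q / (w powr q * (q + 1) powr q)"
  proof -
    have "(w * (q + 1) / q) powr q = w powr q * (q + 1) powr q / q powr q"
      using w q by (simp add: powr_divide powr_mult)
    thus ?thesis using w q by (simp add: powr_minus)
  qed
  finally have "(q + 1) * (1 - w) * (w powr q * (q + 1) powr q) \<le> q powr q"
    using w q by (simp add: pos_le_divide_eq)
  moreover have "(q + 1) powr (q + 1) = (q + 1) * (q + 1) powr q" using q by (simp add: powr_add)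
  ultimately show ?thesis using w q by (simp add: pos_le_divide_eq mult_ac)
qed

lemma weighted_sum_powr_pos:
  fixes c d :: "'a \<Rightarrow> real"
  assumes c: "\<And>k. k \<in> I \<Longrightarrow> c k \<ge> 0" and N: "sum c I > 0" and d: "\<And>k. k \<in> I \<Longrightarrow> d k > 0"
  shows "(\<Sum>k\<in>I. c k * d k powr s) > 0"
proof -
  have fin: "finite I" using N by (metis less_irrefl sum.infinite)
  have "\<not> (\<forall>k\<in>I. c k \<le> 0)" using sum_nonpos[of I c] N by force
  then obtain k0 where k0: "k0 \<in> I" "c k0 > 0" by force
  have "0 < c k0 * d k0 powr s" using k0 d[OF k0(1)] by simp
  also have "\<dots> \<le> (\<Sum>k\<in>I. c k * d k powr s)"
    using k0 c d fin by (intro member_le_sum) auto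
  finally show ?thesis .
qed

text \<open>Jensen's inequality for the convex function \<open>y \<mapsto> y^(-t/s)\<close> at the points \<open>d k ^ s\<close>
  with weights \<open>c k\<close>, obtained by summing the tangent bound at the weighted mean.\<close>

lemma weighted_sum_powr_neg_ge:
  fixes c d :: "'a \<Rightarrow> real" and s t :: real
  assumes c: "\<And>k. k \<in> I \<Longrightarrow> c k \<ge> 0" and N: "sum c I > 0" and d: "\<And>k. k \<in> I \<Longrightarrow> d k > 0"
    and s: "s > 0" and t: "t \<ge> 0"
  shows "sum c I * ((\<Sum>k\<in>I. c k * d k powr s) / sum c I) powr (- (t / s))
    \<le> (\<Sum>k\<in>I. c k * d k powr (- t))"
proof -
  define S where "S = (\<Sum>k\<in>I. c k * d k powr s)"
  define x where "x = S / sum c I"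
  define r where "r = t / s"
  have S: "S > 0" unfolding S_def using weighted_sum_powr_pos[OF c N d] .
  have x: "x > 0" unfolding x_def using S N by simp
  have r: "r \<ge> 0" unfolding r_def using s t by simp
  have tangent: "x powr (- r) * (1 + r - r * (d k powr s / x)) \<le> d k powr (- t)" if k: "k \<in> I" for k
    using powr_neg_ge_tangent_at[OF x _ r, of "d k powr s"] d[OF k] s
    by (simp add: powr_powr r_def)
  have "(\<Sum>k\<in>I. c k * (x powr (- r) * (1 + r - r * (d k powr s / x))))
      = x powr (- r) * ((1 + r) * sum c I - (r / x) * S)"
    unfolding S_def by (simp add: algebra_simps sum_subtractf sum_distrib_left sum_distrib_right sum.distrib)
  also have "(r / x) * S = r * sum c I" unfolding x_def using N S by simp
  finally have "(\<Sum>k\<in>I. c k * (x powr (- r) * (1 + r - r * (d k powr s / x)))) = sum c I * x powr (- r)"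
    by (simp add: algebra_simps)
  moreover have "(\<Sum>k\<in>I. c k * (x powr (- r) * (1 + r - r * (d k powr s / x))))
      \<le> (\<Sum>k\<in>I. c k * d k powr (- t))"
    using tangent c by (intro sum_mono mult_left_mono) auto
  ultimately show ?thesis unfolding x_def S_def r_def by simp
qed

lemma coeff_lt_of_powr_ineq:
  fixes k r q qt x \<mu> :: real
  assumes k: "k > 1" and q: "q > 0" "q \<le> r" "r \<le> qt" and x: "x > 0" and \<mu>: "\<mu> \<ge> 0"
    and ineq: "x + \<mu> * x powr (- r) < k"
  shows "\<mu> < q powr q * k powr (1 + qt) / (q + 1) powr (q + 1)"
proof -
  have "x powr (- r) * x powr r = 1" using x by (simp add: powr_add[symmetric])
  hence "\<mu> < (k - x) * x powr r"
    using mult_strict_right_mono[of "\<mu> * x powr (- r)" "k - x" "x powr r"] ineq x by (simp add: mult.assoc)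
  moreover have "x < k" using ineq \<mu> x by (smt (verit) mult_nonneg_nonneg powr_ge_zero)
  define w where "w = x / k"
  have w: "0 < w" "w < 1" using x \<open>x < k\<close> k by (auto simp: w_def)
  have "(k - x) * x powr r = k powr (1 + r) * ((1 - w) * w powr r)"
    using k w by (simp add: w_def powr_divide powr_add field_simps)
  also have "\<dots> \<le> k powr (1 + qt) * ((1 - w) * w powr q)"
    using k q w by (intro mult_mono powr_mono mult_left_mono powr_mono') auto
  also have "\<dots> \<le> k powr (1 + qt) * (q powr q / (q + 1) powr (q + 1))"
    using one_minus_mult_powr_le[OF w q(1)] k by (intro mult_left_mono) auto
  finally show ?thesis using \<open>\<mu> < (k - x) * x powr r\<close> by (simp add: mult.commute)
qed

section \<open>The eigenvector estimate\<close>

lemma invertible_mat_mult_vec_nonzero: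
  assumes B: "B \<in> carrier_mat n n" "invertible_mat B" and v: "v \<in> carrier_vec n" "v \<noteq> 0\<^sub>v n"
  shows "B *\<^sub>v v \<noteq> 0\<^sub>v n"
proof
  assume Bv: "B *\<^sub>v v = 0\<^sub>v n"
  obtain B' where BB': "B' * B = 1\<^sub>m (dim_row B')" and B'B: "B * B' = 1\<^sub>m (dim_row B)"
    using B(2) unfolding invertible_mat_def inverts_mat_def by auto
  have B': "B' \<in> carrier_mat n n"
    using arg_cong[OF BB', of dim_col] arg_cong[OF B'B, of dim_col] B(1) by auto
  have "v = (B' * B) *\<^sub>v v" using BB' B' v by simp
  also have "\<dots> = B' *\<^sub>v (B *\<^sub>v v)" by (rule assoc_mult_mat_vec[of _ n n _ n]) (use B' B v in auto)
  also have "\<dots> = 0\<^sub>v n" unfolding Bv using B' by (intro eq_vecI) auto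
  finally show False using v by simp
qed

lemma sum_cmod_sq_pos:
  assumes v: "v \<in> carrier_vec n" "v \<noteq> 0\<^sub>v n"
  shows "(\<Sum>k<n. (cmod (v $ k))\<^sup>2) > 0"
proof -
  obtain k where k: "k < n" "v $ k \<noteq> 0" using v by (metis eq_vecI carrier_vecD index_zero_vec)
  show ?thesis by (rule sum_pos2[of _ k]) (use k in auto)
qed

lemma quad_form_spectral_mat_pos:
  assumes U: "unitary_mat n U" and g: "\<forall>i<n. g i > 0" and w: "w \<in> carrier_vec n" "w \<noteq> 0\<^sub>v n"
  shows "Re ((spectral_mat n U g *\<^sub>v w) \<bullet> conjugate w) > 0"
proof -
  let ?c = "\<lambda>k. (cmod ((mat_adjoint U *\<^sub>v w) $ k))\<^sup>2"
  have "(\<Sum>k<n. ?c k) > 0"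
    unfolding unitary_mat_adjoint_mult_vec_norm[OF U w(1)] by (rule sum_cmod_sq_pos[OF w])
  then obtain k where k: "k < n" "?c k > 0" by (metis not_le sum_nonpos lessThan_iff)
  have "(\<Sum>k<n. g k * ?c k) > 0" by (rule sum_pos2[of _ k]) (use k g in auto)
  thus ?thesis unfolding quad_form_spectral_mat[OF U w(1)] by simp
qed

lemma quad_form_adjoint_sandwich_eigenvector:
  assumes A: "A \<in> carrier_mat n n" and M: "M \<in> carrier_mat n n" and v: "v \<in> carrier_vec n"
    and Av: "A *\<^sub>v v = lam \<cdot>\<^sub>v v"
  shows "((mat_adjoint A * M * A) *\<^sub>v v) \<bullet> conjugate v
    = complex_of_real ((cmod lam)\<^sup>2) * ((M *\<^sub>v v) \<bullet> conjugate v)"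
proof -
  have "((mat_adjoint A * M * A) *\<^sub>v v) \<bullet> conjugate v
      = (M *\<^sub>v (lam \<cdot>\<^sub>v v)) \<bullet> conjugate (lam \<cdot>\<^sub>v v)"
    using quad_form_adjoint_sandwich[OF A M v] Av by simp
  also have "\<dots> = (lam * cnj lam) * ((M *\<^sub>v v) \<bullet> conjugate v)"
    using M v by (simp add: mult_mat_vec[OF M v] conjugate_smult_vec mult.assoc)
  finally show ?thesis by (simp only: complex_norm_square)
qed

lemma quad_form_add:
  assumes "M1 \<in> carrier_mat n n" "M2 \<in> carrier_mat n n" "v \<in> carrier_vec n"
  shows "((M1 + M2) *\<^sub>v v) \<bullet> conjugate v
    = (M1 *\<^sub>v v) \<bullet> conjugate v + (M2 *\<^sub>v v) \<bullet> conjugate v"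
  using assms by (simp add: add_mult_distrib_mat_vec[of _ n n] add_scalar_prod_distrib[of _ n])

lemma quad_form_equation_eigenvector:
  fixes A B Q U :: "complex mat" and s t p :: real
  assumes U: "unitary_mat n U" and d: "\<forall>i<n. d i > 0"
    and A: "A \<in> carrier_mat n n" and B: "B \<in> carrier_mat n n" "invertible_mat B"
    and v: "v \<in> carrier_vec n" "v \<noteq> 0\<^sub>v n" and Av: "A *\<^sub>v v = lam \<cdot>\<^sub>v v"
    and eq: "Q = spectral_mat n U (\<lambda>i. d i powr s)
      + mat_adjoint A * spectral_mat n U (\<lambda>i. d i powr (- t)) * A
      + mat_adjoint B * spectral_mat n U (\<lambda>i. d i powr (- p)) * B"
  defines "c k \<equiv> (cmod ((mat_adjoint U *\<^sub>v v) $ k))\<^sup>2"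
  shows "(\<Sum>k<n. c k * d k powr s) + (cmod lam)\<^sup>2 * (\<Sum>k<n. c k * d k powr (- t))
    < Re ((Q *\<^sub>v v) \<bullet> conjugate v)"
proof -
  define Xr where "Xr r = spectral_mat n U (\<lambda>i. d i powr r)" for r
  have Xr: "Xr r \<in> carrier_mat n n" for r unfolding Xr_def using U by simp
  have MA: "mat_adjoint A * Xr (- t) * A \<in> carrier_mat n n"
    and MB: "mat_adjoint B * Xr (- p) * B \<in> carrier_mat n n" using A B(1) Xr by auto
  have quad: "Re ((Xr r *\<^sub>v v) \<bullet> conjugate v) = (\<Sum>k<n. c k * d k powr r)" for r
    unfolding Xr_def quad_form_spectral_mat[OF U v(1)] c_def by (simp add: mult.commute)
  have "Re ((Xr (- p) *\<^sub>v (B *\<^sub>v v)) \<bullet> conjugate (B *\<^sub>v v)) > 0"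
    unfolding Xr_def using d invertible_mat_mult_vec_nonzero[OF B v] B(1) v(1)
    by (intro quad_form_spectral_mat_pos[OF U]) auto
  hence Bpos: "Re (((mat_adjoint B * Xr (- p) * B) *\<^sub>v v) \<bullet> conjugate v) > 0"
    by (simp only: quad_form_adjoint_sandwich[OF B(1) Xr v(1)])
  have "(Q *\<^sub>v v) \<bullet> conjugate v = (Xr s *\<^sub>v v) \<bullet> conjugate v
      + ((mat_adjoint A * Xr (- t) * A) *\<^sub>v v) \<bullet> conjugate v
      + ((mat_adjoint B * Xr (- p) * B) *\<^sub>v v) \<bullet> conjugate v"
    using eq Xr MA MB v(1) unfolding Xr_def[symmetric] by (simp add: quad_form_add[of _ n])
  hence "Re ((Q *\<^sub>v v) \<bullet> conjugate v)
      = (\<Sum>k<n. c k * d k powr s) + (cmod lam)\<^sup>2 * (\<Sum>k<n. c k * d k powr (- t))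
        + Re (((mat_adjoint B * Xr (- p) * B) *\<^sub>v v) \<bullet> conjugate v)"
    unfolding quad_form_adjoint_sandwich_eigenvector[OF A Xr v(1) Av] by (simp add: quad)
  thus ?thesis using Bpos by linarith
qed

lemma eigenvalue_powr_ineq:
  fixes A B Q X :: "complex mat" and s t p :: real
  assumes s: "s > 0" and t: "t \<ge> 0"
    and A: "A \<in> carrier_mat n n" and B: "B \<in> carrier_mat n n" "invertible_mat B"
    and Q: "posdef_mat n Q" and X: "posdef_mat n X"
    and eq: "mat_rpow n X s + mat_adjoint A * mat_rpow n X (- t) * A
      + mat_adjoint B * mat_rpow n X (- p) * B = Q"
    and lam: "lam \<in> spectrum A"
  shows "\<exists>x>0. x + (cmod lam)\<^sup>2 * x powr (- (t / s)) < lambda_max Q"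
proof -
  obtain U d where U: "unitary_mat n U" and d: "\<forall>i<n. d i > 0" and XU: "X = spectral_mat n U d"
    using posdef_spectral_decomposition[OF X] by blast
  obtain v where v: "v \<in> carrier_vec n" "v \<noteq> 0\<^sub>v n" and Av: "A *\<^sub>v v = lam \<cdot>\<^sub>v v"
    using lam A unfolding spectrum_def eigenvalue_def eigenvector_def by auto
  define c where "c k = (cmod ((mat_adjoint U *\<^sub>v v) $ k))\<^sup>2" for k
  define N where "N = sum c {..<n}"
  define S where "S = (\<Sum>k<n. c k * d k powr s)"
  define x where "x = S / N"
  have norm: "N = (\<Sum>k<n. (cmod (v $ k))\<^sup>2)"
    unfolding N_def c_def by (rule unitary_mat_adjoint_mult_vec_norm[OF U v(1)])
  have N: "N > 0" unfolding norm by (rule sum_cmod_sq_pos[OF v])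
  have x: "x > 0"
    unfolding x_def S_def using weighted_sum_powr_pos[of "{..<n}" c d s] N d c_def N_def by simp
  have mean: "N * x powr (- (t / s)) \<le> (\<Sum>k<n. c k * d k powr (- t))"
    unfolding x_def S_def N_def using weighted_sum_powr_neg_ge[OF _ N[unfolded N_def] _ s t] d c_def by simp
  have "S + (cmod lam)\<^sup>2 * (\<Sum>k<n. c k * d k powr (- t)) < Re ((Q *\<^sub>v v) \<bullet> conjugate v)"
    unfolding S_def c_def
    by (rule quad_form_equation_eigenvector[OF U d A B v Av, where p = p])
      (use eq in \<open>simp add: XU mat_rpow_spectral_mat[OF U d]\<close>)
  also have "\<dots> \<le> lambda_max Q * N"
    using quad_form_le_lambda_max[OF _ v(1), of Q] Q unfolding posdef_mat_def norm by simp
  finally have "S + (cmod lam)\<^sup>2 * (N * x powr (- (t / s))) < lambda_max Q * N"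
    using mean by (smt (verit) mult_left_mono zero_le_power2)
  hence "N * (x + (cmod lam)\<^sup>2 * x powr (- (t / s))) < N * lambda_max Q"
    unfolding x_def using N by (simp add: algebra_simps)
  thus ?thesis using x N by auto
qed

lemma mat_rpow_carrier: "posdef_mat n X \<Longrightarrow> mat_rpow n X r \<in> carrier_mat n n"
  using posdef_spectral_decomposition mat_rpow_spectral_mat spectral_mat_carrier by metis

lemma add_mat_right_commute:
  fixes A B C :: "'a :: comm_monoid_add mat"
  assumes "A \<in> carrier_mat n m" "B \<in> carrier_mat n m" "C \<in> carrier_mat n m"
  shows "A + B + C = A + C + B"
  using assms by (simp add: assoc_add_mat[OF assms(1)] comm_add_mat[OF assms(2,3)])

lemma spectral_radius_sq_lt_bound:
  fixes M :: "complex mat"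
  assumes M: "M \<in> carrier_mat n n" and n: "n > 0" and k: "k > 1" and q: "q > 0" "q \<le> r" "r \<le> qt"
    and ineq: "\<And>lam. lam \<in> spectrum M \<Longrightarrow> \<exists>x>0. x + (cmod lam)\<^sup>2 * x powr (- r) < k"
  shows "(spectral_radius M)\<^sup>2 < q powr q * k powr (1 + qt) / (q + 1) powr (q + 1)"
proof -
  obtain lam where "lam \<in> spectrum M" and rho: "spectral_radius M = cmod lam"
    using spectral_radius_mem_max(1)[OF M n] by auto
  then obtain x where "x > 0" "x + (cmod lam)\<^sup>2 * x powr (- r) < k" using ineq by blast
  thus ?thesis unfolding rho by (intro coeff_lt_of_powr_ineq[OF k q]) auto
qed

theorem mainTheorem3:
  fixes n :: nat and s t p :: real and A B Q :: "complex mat"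
  assumes n: "n > 0"
    and st: "s \<ge> 1" and tt: "t \<ge> 1" and pt: "p \<ge> 1"
    and A: "A \<in> carrier_mat n n" and Ainv: "invertible_mat A"
    and B: "B \<in> carrier_mat n n" and Binv: "invertible_mat B"
    and Q: "posdef_mat n Q" and k: "lambda_max Q > 1"
    and sol: "\<exists>X. posdef_mat n X \<and>
       mat_rpow n X s + mat_adjoint A * mat_rpow n X (- t) * A
         + mat_adjoint B * mat_rpow n X (- p) * B = Q"
  shows "let q = min (t / s) (p / s); qt = max (t / s) (p / s); k = lambda_max Q;
             bound = q powr q * k powr (1 + qt) / (q + 1) powr (q + 1)
         in (spectral_radius A)\<^sup>2 < bound \<and> (spectral_radius B)\<^sup>2 < bound"
proof -
  obtain X where X: "posdef_mat n X" and eqA: "mat_rpow n X s + mat_adjoint A * mat_rpow n X (- t) * A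
      + mat_adjoint B * mat_rpow n X (- p) * B = Q" using sol by blast
  have eqB: "mat_rpow n X s + mat_adjoint B * mat_rpow n X (- p) * B
      + mat_adjoint A * mat_rpow n X (- t) * A = Q"
    using eqA add_mat_right_commute[of _ n n] mat_rpow_carrier[OF X] A B by (metis mult_carrier_mat mat_adjoint_carrier)
  define q where "q = min (t / s) (p / s)"
  define qt where "qt = max (t / s) (p / s)"
  have s: "s > 0" and q: "q > 0" using st tt pt by (auto simp: q_def)
  have "(spectral_radius A)\<^sup>2 < q powr q * lambda_max Q powr (1 + qt) / (q + 1) powr (q + 1)"
    using eigenvalue_powr_ineq[OF s _ A B Binv Q X eqA] tt
    by (intro spectral_radius_sq_lt_bound[OF A n k q, of "t / s" qt]) (auto simp: q_def qt_def)
  moreover have "(spectral_radius B)\<^sup>2 < q powr q * lambda_max Q powr (1 + qt) / (q + 1) powr (q + 1)"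
    using eigenvalue_powr_ineq[OF s _ B A Ainv Q X eqB] pt
    by (intro spectral_radius_sq_lt_bound[OF B n k q, of "p / s" qt]) (auto simp: q_def qt_def)
  ultimately show ?thesis unfolding Let_def q_def qt_def by simp
qed

end
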